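(* Let $A\in\mathbb{R}^{m\times n}$ with $m<n$, let $B$ be a matrix whose columns form a basis of the null space of $A$, let $p\in(0,1)$, let $T\subseteq\{1,\dots,n\}$ be a fixed support and let $\sigma\in\{-1,+1\}^T$ be a fixed sign pattern. Then every $\mathbf{x}\in\mathbb{R}^n$ with support exactly $T$ and $\operatorname{sgn}(x_i)=\sigma_i$ for all $i\in T$ is the unique solution of the $\ell_p$-minimization problem $\min\{\|\mathbf{v}\|_p^p : A\mathbf{v}=A\mathbf{x}\}$ if and only if the following holds for every nonzero vector $\mathbf{z}$ (of dimension equal to the number of columns of $B$): with $T^-=\{i\in T:(B\mathbf{z})_i\sigma_i<0\}$ and $T^+=\{i\in T:(B\mathbf{z})_i\sigma_i\ge 0\}$, $$\|B_{T^-}\mathbf{z}\|_p^p\le \|B_{T^c}\mathbf{z}\|_p^p,$$ and moreover, if $B_{T^+}\mathbf{z}=\mathbf{0}$, then $\|B_{T^-}\mathbf{z}\|_p^p< \|B_{T^c}\mathbf{z}\|_p^p$.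
   Context: For $p>0$, $\|\mathbf{v}\|_p^p=\sum_i|v_i|^p$. For an index set $S$, $B_S$ denotes the submatrix of $B$ consisting of the rows indexed by $S$; $T^c=\{1,\dots,n\}\setminus T$. The support of $\mathbf{x}$ is $\{i: x_i\neq 0\}$. *)

theory Defs
  imports "HOL-Analysis.Analysis"
begin

text \<open>The p-th power of the l_p quasi-norm of the restriction of a vector to an index set S:
  sum over i in S of |y_i|^p. For y = B z this is the quantity for the submatrix B_S applied to z.\<close>
definition lpp :: "real \<Rightarrow> 'n set \<Rightarrow> real^'n \<Rightarrow> real" where
  "lpp p S y = (\<Sum>i\<in>S. \<bar>y $ i\<bar> powr p)"

definition support_vec :: "real^'n \<Rightarrow> 'n set" where
  "support_vec x = {i. x $ i \<noteq> 0}"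

definition columns_basis_of_null_space :: "real^'k^'n \<Rightarrow> real^'n^'m \<Rightarrow> bool" where
  "columns_basis_of_null_space B A \<longleftrightarrow>
     inj (\<lambda>j. column j B) \<and> independent (columns B) \<and>
     span (columns B) = {v. A *v v = 0}"

definition unique_lp_solution :: "real^'n^'m \<Rightarrow> real \<Rightarrow> real^'n \<Rightarrow> bool" where
  "unique_lp_solution A p x \<longleftrightarrow>
     (\<forall>v. A *v v = A *v x \<and> v \<noteq> x \<longrightarrow> lpp p UNIV x < lpp p UNIV v)"

end

theory Submission
  imports Defs
begin

text \<open>
  Write w = B z for a nonzero null vector of A, and split T
  into T^- (where w opposes \<sigma>) and T^+ (the rest).

  Sufficiency: for x with support T and signs \<sigma>, the subadditivity of t^p gives
  ||x + w||_p^p \<ge> ||x||_p^p - ||w_{T^-}||_p^p + ||w_{T^c}||_p^p, with strict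
  inequality when w does not vanish on T^+; the null space condition then makes x + w
  strictly more costly than x.

  Necessity: for M > 0 take x = -w on T^- and x = M \<sigma> on T^+.  Its uniqueness gives
  ||w_{T^-}||_p^p < ||w_{T^c}||_p^p + M^(p-1) ||w_{T^+}||_1, and M \<rightarrow> \<infinity> yields the
  non-strict inequality (the strict one when w vanishes on T^+).
\<close>

lemma powr_add_le:
  fixes s t p :: real
  assumes "0 \<le> s" "0 \<le> t" "0 < p" "p \<le> 1"
  shows "(s + t) powr p \<le> s powr p + t powr p"
proof (cases "s + t = 0")
  case True
  then show ?thesis using assms by simp
next
  case False
  then have pos: "s + t > 0" using assms by simp
  have le_powr: "u \<le> u powr p" if "0 \<le> u" "u \<le> 1" for u :: real
    using that assms by (metis powr_mono' powr_one)
  have "1 = s / (s + t) + t / (s + t)"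
    using pos by (simp add: add_divide_distrib[symmetric])
  also have "\<dots> \<le> (s / (s + t)) powr p + (t / (s + t)) powr p"
    using assms pos by (intro add_mono le_powr) (auto simp: divide_simps)
  also have "\<dots> = (s powr p + t powr p) / (s + t) powr p"
    using assms pos by (simp add: powr_divide add_divide_distrib)
  finally show ?thesis using pos by (simp add: divide_simps)
qed

lemma abs_powr_triangle:
  fixes a b p :: real
  assumes "0 < p" "p \<le> 1"
  shows "\<bar>a\<bar> powr p \<le> \<bar>a + b\<bar> powr p + \<bar>b\<bar> powr p"
proof -
  have "\<bar>a\<bar> powr p \<le> (\<bar>a + b\<bar> + \<bar>b\<bar>) powr p"
    using assms by (intro powr_mono2) auto
  also have "\<dots> \<le> \<bar>a + b\<bar> powr p + \<bar>b\<bar> powr p"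
    using assms by (intro powr_add_le) auto
  finally show ?thesis .
qed

text \<open>Concavity bound at M: (M + a)^p \<le> M^p + M^(p-1) a.  For large M the right-hand
  side exceeds M^p by an arbitrarily small amount when p < 1.\<close>
lemma powr_add_le_tangent:
  fixes M a p :: real
  assumes "0 < M" "0 \<le> a" "0 < p" "p \<le> 1"
  shows "(M + a) powr p \<le> M powr p + M powr (p - 1) * a"
proof -
  have "(M + a) powr p = M powr p * (1 + a / M) powr p"
    using assms by (simp add: powr_mult[symmetric] distrib_left)
  also have "\<dots> \<le> M powr p * (1 + a / M)"
    using assms powr_mono[of p 1 "1 + a / M"] by (intro mult_left_mono) auto
  also have "\<dots> = M powr p + M powr (p - 1) * a"
    using assms by (simp add: powr_diff distrib_left)
  finally show ?thesis .
qed

lemma le_if_less_plus_vanishing: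
  fixes a b C p :: real
  assumes "p < 1" "0 \<le> C" and less: "\<And>M. 0 < M \<Longrightarrow> a < b + M powr (p - 1) * C"
  shows "a \<le> b"
proof (rule ccontr)
  assume "\<not> a \<le> b"
  then have D: "0 < a - b" by simp
  define M where "M = ((a - b) / (C + 1)) powr (1 / (p - 1))"
  have "0 < M" using D assms(2) by (simp add: M_def)
  have "M powr (p - 1) = (a - b) / (C + 1)"
    using assms(1,2) D by (simp add: M_def powr_powr)
  moreover have "M powr (p - 1) * C \<le> M powr (p - 1) * (C + 1)"
    by (intro mult_left_mono) auto
  ultimately have "M powr (p - 1) * C \<le> a - b"
    using assms(2) by simp
  then show False using less[OF \<open>0 < M\<close>] by linarith
qed

definition neg_part :: "'n set \<Rightarrow> ('n \<Rightarrow> real) \<Rightarrow> real^'n \<Rightarrow> 'n set" where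
  "neg_part T \<sigma> w = {i\<in>T. w $ i * \<sigma> i < 0}"

definition pos_part :: "'n set \<Rightarrow> ('n \<Rightarrow> real) \<Rightarrow> real^'n \<Rightarrow> 'n set" where
  "pos_part T \<sigma> w = {i\<in>T. w $ i * \<sigma> i \<ge> 0}"

lemma lpp_union:
  assumes "S1 \<inter> S2 = {}"
  shows "lpp p (S1 \<union> S2) y = lpp p S1 y + lpp p S2 y"
  unfolding lpp_def using assms by (simp add: sum.union_disjoint)

lemma lpp_sign_split:
  fixes y :: "real^'n"
  shows "lpp p UNIV y = lpp p (neg_part T \<sigma> w) y + lpp p (pos_part T \<sigma> w) y + lpp p (UNIV - T) y"
proof -
  have T: "T = neg_part T \<sigma> w \<union> pos_part T \<sigma> w"
    and disj: "neg_part T \<sigma> w \<inter> pos_part T \<sigma> w = {}"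
    by (auto simp: neg_part_def pos_part_def)
  have "lpp p UNIV y = lpp p T y + lpp p (UNIV - T) y"
    using lpp_union[of T "UNIV - T" p y] by (simp add: Un_absorb1)
  also have "lpp p T y = lpp p (neg_part T \<sigma> w) y + lpp p (pos_part T \<sigma> w) y"
    by (subst T) (rule lpp_union[OF disj])
  finally show ?thesis .
qed

text \<open>On T^+, x (which has sign pattern \<sigma>) and w have the same sign, so their
  absolute values add up.\<close>
lemma abs_add_pos_part:
  assumes "\<forall>i\<in>T. sgn (x $ i) = \<sigma> i" and "i \<in> pos_part T \<sigma> w"
  shows "\<bar>x $ i + w $ i\<bar> = \<bar>x $ i\<bar> + \<bar>w $ i\<bar>"
proof -
  have sgn: "sgn (x $ i) = \<sigma> i" and w: "0 \<le> w $ i * \<sigma> i"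
    using assms by (auto simp: pos_part_def)
  show ?thesis
  proof (cases "x $ i" "0::real" rule: linorder_cases)
    case less
    then have "w $ i \<le> 0" using sgn w by (simp flip: sgn)
    then show ?thesis using less by simp
  next
    case greater
    then have "0 \<le> w $ i" using sgn w by (simp flip: sgn)
    then show ?thesis using greater by simp
  qed simp
qed

definition signed_nsp :: "real \<Rightarrow> 'n set \<Rightarrow> ('n \<Rightarrow> real) \<Rightarrow> real^'n \<Rightarrow> bool" where
  "signed_nsp p T \<sigma> w \<longleftrightarrow>
     lpp p (neg_part T \<sigma> w) w \<le> lpp p (UNIV - T) w \<and>
     ((\<forall>i\<in>pos_part T \<sigma> w. w $ i = 0) \<longrightarrow> lpp p (neg_part T \<sigma> w) w < lpp p (UNIV - T) w)"

lemma lpp_perturbation_lower_bound: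
  fixes x w :: "real^'n"
  assumes p: "0 < p" "p \<le> 1"
    and supp: "support_vec x = T" and sgn: "\<forall>i\<in>T. sgn (x $ i) = \<sigma> i"
  defines "N \<equiv> neg_part T \<sigma> w" and "P \<equiv> pos_part T \<sigma> w"
  shows "lpp p UNIV x + lpp p (UNIV - T) w \<le> lpp p UNIV (x + w) + lpp p N w"
    and "\<exists>i\<in>P. w $ i \<noteq> 0 \<Longrightarrow>
           lpp p UNIV x + lpp p (UNIV - T) w < lpp p UNIV (x + w) + lpp p N w"
proof -
  have off_T: "x $ i = 0" if "i \<notin> T" for i
    using that supp by (auto simp: support_vec_def)
  have x_split: "lpp p UNIV x = lpp p N x + lpp p P x"
    using lpp_sign_split[of p x T \<sigma> w] off_T by (simp add: N_def P_def lpp_def)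
  have xw_split: "lpp p UNIV (x + w) = lpp p N (x + w) + lpp p P (x + w) + lpp p (UNIV - T) w"
    using lpp_sign_split[of p "x + w" T \<sigma> w] off_T by (simp add: N_def P_def lpp_def)
  have N_bound: "lpp p N x \<le> lpp p N (x + w) + lpp p N w"
    unfolding lpp_def sum.distrib[symmetric]
    by (intro sum_mono) (simp add: abs_powr_triangle p)
  have P_pointwise: "\<bar>x $ i\<bar> powr p \<le> \<bar>(x + w) $ i\<bar> powr p" if "i \<in> P" for i
    using abs_add_pos_part[OF sgn that[unfolded P_def]] p by (intro powr_mono2) auto
  have P_bound: "lpp p P x \<le> lpp p P (x + w)"
    unfolding lpp_def by (intro sum_mono P_pointwise)
  show "lpp p UNIV x + lpp p (UNIV - T) w \<le> lpp p UNIV (x + w) + lpp p N w"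
    using x_split xw_split N_bound P_bound by linarith
  assume "\<exists>i\<in>P. w $ i \<noteq> 0"
  then obtain j where j: "j \<in> P" "w $ j \<noteq> 0" by blast
  have "\<bar>x $ j\<bar> powr p < \<bar>(x + w) $ j\<bar> powr p"
    using abs_add_pos_part[OF sgn j(1)[unfolded P_def]] j(2) p by (intro powr_less_mono2) auto
  then have "lpp p P x < lpp p P (x + w)"
    unfolding lpp_def using j(1) P_pointwise by (intro sum_strict_mono_ex1) auto
  then show "lpp p UNIV x + lpp p (UNIV - T) w < lpp p UNIV (x + w) + lpp p N w"
    using x_split xw_split N_bound by linarith
qed

lemma unique_if_signed_nsp:
  fixes x w :: "real^'n"
  assumes "0 < p" "p \<le> 1" and "support_vec x = T" "\<forall>i\<in>T. sgn (x $ i) = \<sigma> i"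
    and nsp: "signed_nsp p T \<sigma> w"
  shows "lpp p UNIV x < lpp p UNIV (x + w)"
proof (cases "\<exists>i\<in>pos_part T \<sigma> w. w $ i \<noteq> 0")
  case True
  then show ?thesis
    using lpp_perturbation_lower_bound(2)[OF assms(1-4) True] nsp
    unfolding signed_nsp_def by linarith
next
  case False
  then have "lpp p (neg_part T \<sigma> w) w < lpp p (UNIV - T) w"
    using nsp unfolding signed_nsp_def by blast
  then show ?thesis
    using lpp_perturbation_lower_bound(1)[OF assms(1-4), of w] by linarith
qed

lemma sign_pattern_witness:
  fixes w :: "real^'n" and M :: real
  assumes p: "0 < p" "p \<le> 1" and M: "0 < M"
    and sg: "\<forall>i\<in>T. \<sigma> i \<in> {-1, 1}"
  defines "N \<equiv> neg_part T \<sigma> w" and "P \<equiv> pos_part T \<sigma> w"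
  obtains x where "support_vec x = T" and "\<forall>i\<in>T. sgn (x $ i) = \<sigma> i"
    and "lpp p UNIV (x + w) + lpp p N w
           \<le> lpp p UNIV x + lpp p (UNIV - T) w + M powr (p - 1) * (\<Sum>i\<in>P. \<bar>w $ i\<bar>)"
proof
  define x :: "real^'n" where
    "x = (\<chi> i. if i \<in> N then - w $ i else if i \<in> P then \<sigma> i * M else 0)"
  have NP: "N \<subseteq> T" "P \<subseteq> T" "T = N \<union> P" "N \<inter> P = {}"
    by (auto simp: N_def P_def neg_part_def pos_part_def)
  have \<sigma>: "\<sigma> i = 1 \<or> \<sigma> i = -1" if "i \<in> T" for i
    using sg that by auto
  have x_N: "x $ i = - w $ i" and w_N: "w $ i * \<sigma> i < 0" if "i \<in> N" for i
    using that by (auto simp: x_def N_def neg_part_def)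
  have x_P: "x $ i = \<sigma> i * M" and w_P: "w $ i * \<sigma> i \<ge> 0" if "i \<in> P" for i
    using that NP(4) by (auto simp: x_def P_def pos_part_def)
  have x_off: "x $ i = 0" if "i \<notin> T" for i
    using that NP by (auto simp: x_def)
  have x_on_T: "x $ i \<noteq> 0 \<and> sgn (x $ i) = \<sigma> i" if "i \<in> T" for i
  proof (cases "i \<in> N")
    case True
    then show ?thesis using \<sigma>[OF that] x_N[OF True] w_N[OF True] by (auto simp: sgn_if)
  next
    case False
    then have "i \<in> P" using NP(3) that by blast
    then show ?thesis using \<sigma>[OF that] x_P[OF \<open>i \<in> P\<close>] M by (auto simp: sgn_if)
  qed
  show "support_vec x = T"
    using x_on_T x_off by (auto simp: support_vec_def)
  show "\<forall>i\<in>T. sgn (x $ i) = \<sigma> i"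
    using x_on_T by blast
  have P_abs: "\<bar>(x + w) $ i\<bar> = M + \<bar>w $ i\<bar>" "\<bar>x $ i\<bar> = M" if "i \<in> P" for i
  proof -
    have "\<sigma> i = 1 \<or> \<sigma> i = -1" using \<sigma> that NP(2) by blast
    then show "\<bar>(x + w) $ i\<bar> = M + \<bar>w $ i\<bar>" "\<bar>x $ i\<bar> = M"
      using x_P[OF that] w_P[OF that] M by auto
  qed
  have "lpp p UNIV x = lpp p N w + (\<Sum>i\<in>P. M powr p)"
    using lpp_sign_split[of p x T \<sigma> w] x_N P_abs x_off by (simp add: N_def P_def lpp_def)
  moreover have "lpp p UNIV (x + w) = (\<Sum>i\<in>P. (M + \<bar>w $ i\<bar>) powr p) + lpp p (UNIV - T) w"
    using lpp_sign_split[of p "x + w" T \<sigma> w] x_N P_abs x_off by (simp add: N_def P_def lpp_def)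
  moreover have "(\<Sum>i\<in>P. (M + \<bar>w $ i\<bar>) powr p)
                   \<le> (\<Sum>i\<in>P. M powr p) + M powr (p - 1) * (\<Sum>i\<in>P. \<bar>w $ i\<bar>)"
    unfolding sum_distrib_left sum.distrib[symmetric]
    using powr_add_le_tangent M p by (intro sum_mono) auto
  ultimately show "lpp p UNIV (x + w) + lpp p N w
           \<le> lpp p UNIV x + lpp p (UNIV - T) w + M powr (p - 1) * (\<Sum>i\<in>P. \<bar>w $ i\<bar>)"
    by linarith
qed

lemma signed_nsp_if_unique:
  fixes w :: "real^'n"
  assumes p: "0 < p" "p < 1" and sg: "\<forall>i\<in>T. \<sigma> i \<in> {-1, 1}"
    and unique: "\<And>x. support_vec x = T \<Longrightarrow> \<forall>i\<in>T. sgn (x $ i) = \<sigma> i \<Longrightarrow>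
                   lpp p UNIV x < lpp p UNIV (x + w)"
  shows "signed_nsp p T \<sigma> w"
proof -
  define C where "C = (\<Sum>i\<in>pos_part T \<sigma> w. \<bar>w $ i\<bar>)"
  have bound: "lpp p (neg_part T \<sigma> w) w < lpp p (UNIV - T) w + M powr (p - 1) * C"
    if "0 < M" for M
  proof -
    obtain x where "support_vec x = T" "\<forall>i\<in>T. sgn (x $ i) = \<sigma> i"
      and "lpp p UNIV (x + w) + lpp p (neg_part T \<sigma> w) w
             \<le> lpp p UNIV x + lpp p (UNIV - T) w + M powr (p - 1) * C"
      using sign_pattern_witness[OF p(1) _ \<open>0 < M\<close> sg] p(2) unfolding C_def by auto
    then show ?thesis using unique by fastforce
  qed
  have "0 \<le> C" by (simp add: C_def sum_nonneg)
  then have "lpp p (neg_part T \<sigma> w) w \<le> lpp p (UNIV - T) w"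
    using le_if_less_plus_vanishing[OF p(2)] bound by blast
  moreover have "C = 0" if "\<forall>i\<in>pos_part T \<sigma> w. w $ i = 0"
    using that by (simp add: C_def)
  ultimately show ?thesis
    unfolding signed_nsp_def using bound[of 1] by auto
qed

lemma unique_lp_solution_iff:
  fixes A :: "real^'n^'m" and x :: "real^'n"
  shows "unique_lp_solution A p x \<longleftrightarrow>
     (\<forall>w. A *v w = 0 \<and> w \<noteq> 0 \<longrightarrow> lpp p UNIV x < lpp p UNIV (x + w))"
proof
  assume unique: "unique_lp_solution A p x"
  show "\<forall>w. A *v w = 0 \<and> w \<noteq> 0 \<longrightarrow> lpp p UNIV x < lpp p UNIV (x + w)"
  proof (intro allI impI, elim conjE)
    fix w :: "real^'n" assume "A *v w = 0" "w \<noteq> 0"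
    then have "A *v (x + w) = A *v x" "x + w \<noteq> x"
      by (auto simp: matrix_vector_right_distrib)
    then show "lpp p UNIV x < lpp p UNIV (x + w)"
      using unique unfolding unique_lp_solution_def by blast
  qed
next
  assume descent: "\<forall>w. A *v w = 0 \<and> w \<noteq> 0 \<longrightarrow> lpp p UNIV x < lpp p UNIV (x + w)"
  show "unique_lp_solution A p x"
    unfolding unique_lp_solution_def
  proof (intro allI impI, elim conjE)
    fix v assume "A *v v = A *v x" "v \<noteq> x"
    then have "A *v (v - x) = 0" "v - x \<noteq> 0"
      by (auto simp: matrix_vector_mult_diff_distrib)
    then show "lpp p UNIV x < lpp p UNIV v"
      using descent by fastforce
  qed
qed

lemma span_axis_UNIV: "span (range (\<lambda>i. axis i (1::real))) = (UNIV :: (real^'k) set)"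
proof -
  have "Basis = range (\<lambda>i. axis i (1::real))" by (auto simp: Basis_vec_def)
  then show ?thesis using span_Basis by metis
qed

lemma span_columns_eq_range: "span (columns (B::real^'k^'n)) = range ((*v) B)"
  by (simp add: columns_image_basis span_linear_image[OF matrix_vector_mul_linear] span_axis_UNIV)

lemma inj_matrix_if_columns_independent:
  fixes B :: "real^'k^'n"
  assumes "inj (\<lambda>j. column j B)" and "independent (columns B)"
  shows "inj ((*v) B)"
proof -
  have "inj_on ((*v) B) (range (\<lambda>i. axis i 1))"
    using assms(1) by (auto simp: inj_on_def matrix_vector_mult_basis dest: injD)
  then show ?thesis
    using real_vector.linear_inj_on_span_independent_image[OF matrix_vector_mul_linear]
      assms(2) by (metis columns_image_basis span_axis_UNIV)
qed

lemma forall_null_space_iff: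
  fixes A :: "real^'n^'m" and B :: "real^'k^'n"
  assumes "columns_basis_of_null_space B A"
  shows "(\<forall>z. z \<noteq> 0 \<longrightarrow> Q (B *v z)) \<longleftrightarrow> (\<forall>w. A *v w = 0 \<and> w \<noteq> 0 \<longrightarrow> Q w)"
proof -
  have inj: "inj ((*v) B)" and null: "{w. A *v w = 0} = range ((*v) B)"
    using assms inj_matrix_if_columns_independent span_columns_eq_range
    unfolding columns_basis_of_null_space_def by auto
  have nonzero: "B *v z \<noteq> 0 \<longleftrightarrow> z \<noteq> 0" for z
    using inj by (metis injD matrix_vector_mult_0_right)
  have "A *v w = 0 \<longleftrightarrow> (\<exists>z. w = B *v z)" for w
    using null by (auto simp: set_eq_iff)
  then show ?thesis using nonzero by auto
qed

theorem theorem3: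
  fixes A :: "real^'n^'m" and B :: "real^'k^'n" and p :: real
    and T :: "'n set" and \<sigma> :: "'n \<Rightarrow> real"
  assumes "CARD('m) < CARD('n)"
    and "columns_basis_of_null_space B A"
    and "0 < p" and "p < 1"
    and "\<forall>i\<in>T. \<sigma> i \<in> {-1, 1}"
  shows "(\<forall>x::real^'n. support_vec x = T \<and> (\<forall>i\<in>T. sgn (x $ i) = \<sigma> i)
            \<longrightarrow> unique_lp_solution A p x)
    \<longleftrightarrow>
    (\<forall>z::real^'k. z \<noteq> 0 \<longrightarrow>
      (let Tm = {i\<in>T. (B *v z) $ i * \<sigma> i < 0};
           Tp = {i\<in>T. (B *v z) $ i * \<sigma> i \<ge> 0}
       in lpp p Tm (B *v z) \<le> lpp p (UNIV - T) (B *v z) \<and>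
          ((\<forall>i\<in>Tp. (B *v z) $ i = 0) \<longrightarrow> lpp p Tm (B *v z) < lpp p (UNIV - T) (B *v z))))"
proof -
  let ?pattern = "\<lambda>x::real^'n. support_vec x = T \<and> (\<forall>i\<in>T. sgn (x $ i) = \<sigma> i)"
  have "(\<forall>x. ?pattern x \<longrightarrow> unique_lp_solution A p x) \<longleftrightarrow>
        (\<forall>w. A *v w = 0 \<and> w \<noteq> 0 \<longrightarrow> (\<forall>x. ?pattern x \<longrightarrow> lpp p UNIV x < lpp p UNIV (x + w)))"
    unfolding unique_lp_solution_iff by blast
  also have "\<dots> \<longleftrightarrow> (\<forall>w. A *v w = 0 \<and> w \<noteq> 0 \<longrightarrow> signed_nsp p T \<sigma> w)"
    using signed_nsp_if_unique[OF assms(3,4,5)] unique_if_signed_nsp[OF assms(3)] assms(4)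
    by (meson less_imp_le)
  also have "\<dots> \<longleftrightarrow> (\<forall>z. z \<noteq> 0 \<longrightarrow> signed_nsp p T \<sigma> (B *v z))"
    using forall_null_space_iff[OF assms(2)] by simp
  finally show ?thesis
    by (simp add: signed_nsp_def neg_part_def pos_part_def Let_def)
qed

end
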